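(* Let $q$ be a power of an odd prime, $d\ge2$, $E\subset\mathbb F_q^d$, and for $t\in\mathbb F_q$ let $w(t)=\#\{(x,y)\in E\times E:\|x-y\|_Q=t\}$. Then: (i) if $d$ is even and $\eta(\varepsilon)=1$, $0\le w(0)\le \frac{|E|^2}{q}+q^{3d/2}\sum_{m\in(S_{Q^*})_0}|\widehat E(m)|^2$; (ii) if $d$ is even and $\eta(\varepsilon)=-1$, $0\le w(0)\le\frac{|E|^2}{q}+q^{(d-2)/2}|E|$; (iii) if $d$ is odd, $0\le w(0)\le\frac{|E|^2}{q}+q^{(d-1)/2}|E|$.
   Context: $\eta$ is the quadratic character of $\mathbb F_q^*$. Fix a symmetric $d\times d$ matrix $A$ over $\mathbb F_q$ with $\det A\ne0$. If $d$ is even: $\|x\|_Q=x_1^2-x_2^2+\dots+x_{d-1}^2-\varepsilon x_d^2$, $\|m\|_{Q^*}=m_1^2-m_2^2+\dots+m_{d-1}^2-\varepsilon^{-1}m_d^2$, with $\varepsilon\in\mathbb F_q^*$ such that $\eta((-1)^{d/2}\varepsilon)=\eta(\det A)$. If $d$ is odd: $\|x\|_Q=x_1^2-x_2^2+\dots-x_{d-1}^2+\varepsilon x_d^2$, $\|m\|_{Q^*}=m_1^2-m_2^2+\dots-m_{d-1}^2+\varepsilon^{-1}m_d^2$, with $\eta((-1)^{(d-1)/2}\varepsilon)=\eta(\det A)$. $(S_{Q^*})_0=\{m\in\mathbb F_q^d:\|m\|_{Q^*}=0\}$. $\widehat E(m)=q^{-d}\sum_{x\in E}\chi(-m\cdot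 x)$ with $\chi$ the canonical additive character of $\mathbb F_q$ ($\chi(c)=e^{2\pi i\,\mathrm{Tr}(c)/p}$). *)

theory Defs
  imports Complex_Main "HOL-Library.Cardinality" "Jordan_Normal_Form.Determinant"
begin

text \<open>Finite field F_q: a type of class field and finite; q = CARD('a), p = CHAR('a).
  Vectors of F_q^d: functions nat => 'a supported on {..<d}.\<close>

definition vecs :: "nat \<Rightarrow> (nat \<Rightarrow> 'a) set" where
  "vecs d = PiE {..<d} (\<lambda>_. UNIV)"

definition ff_trace :: "'a::{field,finite} \<Rightarrow> 'a" where
  "ff_trace c = (\<Sum>j < (THE n. CHAR('a) ^ n = CARD('a)). c ^ (CHAR('a) ^ j))"

definition add_char :: "'a::{field,finite} \<Rightarrow> complex" where
  "add_char c = cis (2 * pi * real (THE k. k < CHAR('a) \<and> of_nat k = ff_trace c) / real CHAR('a))"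

definition qchar :: "'a::{field,finite} \<Rightarrow> int" where
  "qchar a = (if a = 0 then 0 else if (\<exists>b. b ^ 2 = a) then 1 else -1)"

text \<open>x_1^2 - x_2^2 + ... (+/-) x_{d-1}^2 + c x_d^2 with c = -e (d even), c = e (d odd);
  0-based indices.\<close>
definition qform :: "nat \<Rightarrow> 'a::field \<Rightarrow> (nat \<Rightarrow> 'a) \<Rightarrow> 'a" where
  "qform d e x = (\<Sum>i < d - 1. (-1) ^ i * x i ^ 2) + (if even d then - e else e) * x (d - 1) ^ 2"

definition normQ :: "nat \<Rightarrow> 'a::field \<Rightarrow> (nat \<Rightarrow> 'a) \<Rightarrow> 'a" where
  "normQ d e x = qform d e x"

definition normQdual :: "nat \<Rightarrow> 'a::field \<Rightarrow> (nat \<Rightarrow> 'a) \<Rightarrow> 'a" where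
  "normQdual d e m = qform d (inverse e) m"

definition dotp :: "nat \<Rightarrow> (nat \<Rightarrow> 'a::field) \<Rightarrow> (nat \<Rightarrow> 'a) \<Rightarrow> 'a" where
  "dotp d m x = (\<Sum>i < d. m i * x i)"

definition fourier :: "nat \<Rightarrow> (nat \<Rightarrow> 'a::{field,finite}) set \<Rightarrow> (nat \<Rightarrow> 'a) \<Rightarrow> complex" where
  "fourier d E m = (1 / of_nat (CARD('a) ^ d)) * (\<Sum>x\<in>E. add_char (- dotp d m x))"

definition wcount :: "nat \<Rightarrow> 'a::{field,finite} \<Rightarrow> (nat \<Rightarrow> 'a) set \<Rightarrow> 'a \<Rightarrow> nat" where
  "wcount d e E t = card {(x, y). x \<in> E \<and> y \<in> E \<and> normQ d e (\<lambda>i. x i - y i) = t}"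

definition SQdual0 :: "nat \<Rightarrow> 'a::{field,finite} \<Rightarrow> (nat \<Rightarrow> 'a) set" where
  "SQdual0 d e = {m \<in> vecs d. normQdual d e m = 0}"

end

theory Submission
  imports Defs "HOL-Algebra.Sylow" "HOL-Algebra.Multiplicative_Group"
    "HOL-Computational_Algebra.Polynomial" "HOL-Number_Theory.Cong"
begin

text \<open>
  Expanding the indicator of \<open>Q(z) = 0\<close> as \<open>q\<^sup>-\<^sup>1 \<Sum>\<^sub>s \<chi>(s Q(z))\<close> and passing to Fourier
  coefficients gives \<open>w(0) = |E|^2/q + q^(d-1) \<Sum>\<^sub>m T(m) |fourier d E m|^2\<close>, where the first
  term comes from \<open>s = 0\<close> and \<open>T(m) = \<Sum>\<^sub>s\<^sub>\<noteq>\<^sub>0 \<Sum>\<^sub>z \<chi>(s Q(z) - m\<cdot>z)\<close>. As \<open>Q\<close> is diagonal,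
  completing the square coordinatewise turns \<open>T(m)\<close> into \<open>\<Sum>\<^sub>s\<^sub>\<noteq>\<^sub>0 \<chi>(-Q\<^sup>*(m)/4s)\<close> times a
  product of Gauss sums \<open>G(\<plusminus>s)\<close>, \<open>G(\<plusminus>s\<epsilon>)\<close>. Pairing off \<open>G(s) G(-s) = q\<close>, the product is
  \<open>\<eta>(\<epsilon>) q^(d/2)\<close> for even \<open>d\<close>, so \<open>T(m) = \<eta>(\<epsilon>) q^(d/2) (q [Q\<^sup>*(m) = 0] - 1)\<close>; for odd \<open>d\<close>
  one factor \<open>G(s\<epsilon>) = \<eta>(s) G(\<epsilon>)\<close> is left over, the sum over \<open>s\<close> becomes another Gauss sum,
  and \<open>|T(m)| \<le> q^((d+1)/2)\<close>. Plancherel, \<open>\<Sum>\<^sub>m |fourier d E m|^2 = |E|/q^d\<close>, then gives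
  the three bounds.
\<close>

section \<open>Finite fields\<close>

lemma prime_CHAR_finite: "prime CHAR('a::{field,finite})"
  by (rule prime_CHAR_semidom) (simp add: finite_imp_CHAR_pos)

lemma power_card_eq_self: "(x::'a::{field,finite}) ^ CARD('a) = x"
proof (cases "x = 0")
  case False
  have "x ^ card (UNIV - {0::'a}) * (\<Prod>y\<in>UNIV - {0}. y) = (\<Prod>y\<in>UNIV - {0::'a}. x * y)"
    by (simp add: prod.distrib)
  also have "\<dots> = (\<Prod>y\<in>UNIV - {0}. y)"
    by (rule prod.reindex_bij_witness[of _ "\<lambda>y. y / x" "\<lambda>y. x * y"]) (use False in auto)
  finally have "x ^ (CARD('a) - 1) = 1"
    by (simp add: card_Diff_singleton)
  then show ?thesis
    by (metis power_minus_mult finite_UNIV_card_ge_0 finite_class.finite_UNIV mult_1_left)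
qed (simp add: finite_UNIV_card_ge_0)

lemma prime_dvd_card_eq_CHAR:
  assumes r: "prime r" "r dvd CARD('a::{field,finite})"
  shows "r = CHAR('a)"
proof -
  define G where "G = \<lparr>carrier = (UNIV :: 'a set), monoid.mult = (+), one = (0 :: 'a)\<rparr>"
  have G_pow: "x [^]\<^bsub>G\<^esub> (k::nat) = of_nat k * x" for x k
    by (induction k) (simp_all add: G_def algebra_simps)
  have grp: "group G"
    by (rule groupI) (auto simp: G_def add_ac intro: exI[of _ "- _"])
  have "order G = r ^ 1 * (CARD('a) div r)"
    using r by (simp add: G_def order_def)
  from sylow_thm[OF r(1) grp this] obtain H where H: "subgroup H G" "card H = r"
    by auto
  have "\<not> H \<subseteq> {0}"
    using H r(1) prime_gt_1_nat card_mono[of "{0::'a}" H] by (auto simp: subset_singleton_iff)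
  then obtain x where x: "x \<in> H" "x \<noteq> 0"
    by blast
  interpret H: group "G\<lparr>carrier := H\<rparr>"
    using subgroup.subgroup_is_group[OF H(1) grp] .
  have "x [^]\<^bsub>G\<lparr>carrier := H\<rparr>\<^esub> r = 0"
    using H.pow_order_eq_1[of x] x H(2) by (simp add: order_def G_def)
  then have "of_nat r * x = 0"
    using H by (simp add: G_pow monoid.nat_pow_consistent[symmetric] group.is_monoid[OF grp])
  then have "CHAR('a) dvd r"
    using x(2) by (simp add: of_nat_eq_0_iff_char_dvd)
  then show ?thesis
    using r(1) prime_CHAR_finite[where 'a='a] by (metis primes_dvd_imp_eq)
qed

lemma card_eq_CHAR_power: "\<exists>n. CARD('a::{field,finite}) = CHAR('a) ^ n"
  using Ex_other_prime_factor[of "CARD('a)" "CHAR('a)"] prime_CHAR_finite[where 'a='a]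
  by (auto simp: in_prime_factors_iff dest: prime_dvd_card_eq_CHAR[rotated])

abbreviation field_degree :: "'a::{field,finite} itself \<Rightarrow> nat" where
  "field_degree _ \<equiv> THE n. CHAR('a) ^ n = CARD('a)"

lemma CHAR_power_field_degree: "CHAR('a::{field,finite}) ^ field_degree TYPE('a) = CARD('a)"
proof -
  obtain n where n: "CARD('a) = CHAR('a) ^ n"
    using card_eq_CHAR_power by blast
  have "CHAR('a) > 1"
    using prime_CHAR_finite prime_gt_1_nat by blast
  then have "\<exists>!n. CHAR('a) ^ n = CARD('a)"
    using n by (auto intro!: ex1I[of _ n])
  then show ?thesis
    by (rule theI')
qed

lemma field_degree_pos: "field_degree TYPE('a::{field,finite}) > 0"
proof (rule ccontr)
  assume "\<not> field_degree TYPE('a) > 0"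
  then have "CARD('a) = 1"
    using CHAR_power_field_degree[where 'a='a] by simp
  moreover have "CARD('a) \<ge> 2"
    using card_mono[of "UNIV::'a set" "{0, 1}"] by simp
  ultimately show False
    by simp
qed

lemma ff_trace_add: "ff_trace (a + b) = ff_trace a + ff_trace (b::'a::{field,finite})"
  unfolding ff_trace_def by (simp add: sum.distrib freshmans_dream'[OF prime_CHAR_finite])

lemma ff_trace_power_CHAR: "ff_trace (c::'a::{field,finite}) ^ CHAR('a) = ff_trace c"
proof -
  let ?p = "CHAR('a)" and ?n = "field_degree TYPE('a)"
  have "ff_trace c ^ ?p = (\<Sum>j<?n. c ^ (?p ^ Suc j))"
    unfolding ff_trace_def
    by (simp add: freshmans_dream_sum[OF prime_CHAR_finite] power_mult[symmetric] mult.commute)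
  also have "\<dots> = (\<Sum>j<Suc ?n. c ^ (?p ^ j)) - c"
    by (subst sum.lessThan_Suc_shift) simp
  also have "\<dots> = ff_trace c"
    by (simp add: ff_trace_def CHAR_power_field_degree power_card_eq_self)
  finally show ?thesis .
qed

text \<open>The fixed points of Frobenius are the roots of \<open>X^p - X\<close>; the \<open>p\<close> elements of the prime
  field are among them, so there is no room for others.\<close>
lemma power_CHAR_eq_self_imp_of_nat:
  assumes "(y::'a::{field,finite}) ^ CHAR('a) = y"
  shows "\<exists>k < CHAR('a). y = of_nat k"
proof -
  let ?p = "CHAR('a)"
  have p2: "?p \<ge> 2"
    using prime_CHAR_finite prime_ge_2_nat by blast
  define P :: "'a poly" where "P = Polynomial.monom 1 ?p - [:0, 1:]"
  have "Polynomial.coeff P ?p = 1"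
    using p2 by (simp add: P_def coeff_pCons split: nat.split)
  then have "P \<noteq> 0"
    by auto
  have "degree P \<le> ?p"
    by (rule degree_le) (use p2 in \<open>auto simp: P_def coeff_pCons split: nat.split\<close>)
  have poly_P: "poly P x = x ^ ?p - x" for x
    by (simp add: P_def poly_monom)
  have "(of_nat k :: 'a) ^ ?p = of_nat k" for k
    by (induction k) (simp_all add: freshmans_dream[OF prime_CHAR_finite] prime_gt_0_nat[OF prime_CHAR_finite])
  then have "of_nat ` {..<?p} \<subseteq> {x. poly P x = (0::'a)}"
    by (auto simp: poly_P)
  moreover have "card (of_nat ` {..<?p} :: 'a set) = ?p"
    by (subst card_image) (auto intro!: inj_onI simp: of_nat_eq_iff_cong_CHAR cong_def)
  moreover have "card {x. poly P x = (0::'a)} \<le> ?p"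
    using card_poly_roots_bound[OF \<open>P \<noteq> 0\<close>] \<open>degree P \<le> ?p\<close> by simp
  ultimately have "of_nat ` {..<?p} = {x. poly P x = (0::'a)}"
    by (intro card_seteq) auto
  moreover have "poly P y = 0"
    using assms by (simp add: poly_P)
  ultimately show ?thesis
    by auto
qed

text \<open>The trace is a polynomial function of degree \<open>p^(n-1) < q\<close>, so it cannot vanish on all of
  the field.\<close>
lemma ff_trace_nonzero: "\<exists>c::'a::{field,finite}. ff_trace c \<noteq> 0"
proof (rule ccontr)
  assume "\<nexists>c::'a. ff_trace c \<noteq> 0"
  let ?p = "CHAR('a)" and ?n = "field_degree TYPE('a)"
  have p2: "?p \<ge> 2"
    using prime_CHAR_finite prime_ge_2_nat by blast
  define P :: "'a poly" where "P = (\<Sum>j<?n. Polynomial.monom 1 (?p ^ j))"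
  have coeff_P: "Polynomial.coeff P i = (\<Sum>j<?n. if ?p ^ j = i then 1 else 0)" for i
    by (simp add: P_def Polynomial.coeff_sum)
  have "Polynomial.coeff P (?p ^ (?n - 1)) = (\<Sum>j\<in>{?n - 1}. 1)"
    unfolding coeff_P using field_degree_pos[where 'a='a] p2
    by (intro sum.mono_neutral_cong_right) auto
  then have "P \<noteq> 0"
    by auto
  have "degree P \<le> ?p ^ (?n - 1)"
  proof (rule degree_le, intro allI impI)
    fix i assume "?p ^ (?n - 1) < i"
    moreover have "?p ^ j \<le> ?p ^ (?n - 1)" if "j < ?n" for j
      using that p2 by (intro power_increasing) auto
    ultimately show "Polynomial.coeff P i = 0"
      by (force simp: coeff_P intro!: sum.neutral)
  qed
  moreover have "poly P c = ff_trace c" for c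
    by (simp add: P_def poly_sum poly_monom ff_trace_def)
  then have "{x. poly P x = 0} = UNIV"
    using \<open>\<nexists>c. ff_trace c \<noteq> 0\<close> by auto
  ultimately have "CARD('a) \<le> ?p ^ (?n - 1)"
    using card_poly_roots_bound[OF \<open>P \<noteq> 0\<close>] by simp
  moreover have "?p ^ (?n - 1) < ?p ^ ?n"
    using p2 field_degree_pos[where 'a='a] by (intro power_strict_increasing) auto
  ultimately show False
    using CHAR_power_field_degree[where 'a='a] by simp
qed

section \<open>The canonical additive character\<close>

definition ff_trace_nat :: "'a::{field,finite} \<Rightarrow> nat" where
  "ff_trace_nat c = (THE k. k < CHAR('a) \<and> of_nat k = ff_trace c)"

lemma ff_trace_nat_less: "ff_trace_nat (c::'a::{field,finite}) < CHAR('a)"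
  and of_nat_ff_trace_nat: "of_nat (ff_trace_nat c) = ff_trace c"
proof -
  obtain k where k: "k < CHAR('a)" "ff_trace c = of_nat k"
    using power_CHAR_eq_self_imp_of_nat[OF ff_trace_power_CHAR[of c]] by blast
  have "\<exists>!k. k < CHAR('a) \<and> of_nat k = ff_trace c"
    using k by (intro ex1I[of _ k]) (auto simp: of_nat_eq_iff_cong_CHAR cong_def)
  then have "ff_trace_nat c < CHAR('a) \<and> of_nat (ff_trace_nat c) = ff_trace c"
    unfolding ff_trace_nat_def by (rule theI')
  then show "ff_trace_nat c < CHAR('a)" "of_nat (ff_trace_nat c) = ff_trace c"
    by simp_all
qed

lemma add_char_eq_cis:
  "add_char (c::'a::{field,finite}) = cis (2 * pi * real (ff_trace_nat c) / real CHAR('a))"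
  by (simp add: add_char_def ff_trace_nat_def)

lemma add_char_add: "add_char (a + b) = add_char a * add_char (b::'a::{field,finite})"
proof -
  let ?p = "CHAR('a)" and ?k = "ff_trace_nat"
  have "of_nat (?k (a + b)) = (of_nat (?k a + ?k b) :: 'a)"
    by (simp add: of_nat_ff_trace_nat ff_trace_add)
  then have "[?k (a + b) = ?k a + ?k b] (mod ?p)"
    by (simp only: of_nat_eq_iff_cong_CHAR)
  then have "?k (a + b) = (?k a + ?k b) mod ?p"
    using ff_trace_nat_less[of "a + b"] by (auto simp: cong_def)
  then have carry: "?k a + ?k b = ?k (a + b) + ?p * ((?k a + ?k b) div ?p)"
    by simp
  have "add_char a * add_char b = cis (2 * pi * real (?k a + ?k b) / ?p)"
    by (simp add: add_char_eq_cis cis_mult add_divide_distrib distrib_left)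
  also have "\<dots> = cis (2 * pi * real (?k (a + b)) / ?p + 2 * pi * real ((?k a + ?k b) div ?p))"
    by (subst carry) (simp add: add_divide_distrib distrib_left mult.assoc)
  also have "\<dots> = add_char (a + b)"
    by (simp add: add_char_eq_cis flip: cis_mult)
  finally show ?thesis ..
qed

lemma norm_add_char [simp]: "cmod (add_char (c::'a::{field,finite})) = 1"
  by (simp add: add_char_def)

lemma add_char_0 [simp]: "add_char (0::'a::{field,finite}) = 1"
proof -
  have "add_char (0::'a) \<noteq> 0"
    using norm_add_char[of "0::'a"] by (metis norm_zero zero_neq_one)
  then show ?thesis
    using add_char_add[of "0::'a" 0] by simp
qed

lemma add_char_uminus: "add_char (- c) = cnj (add_char (c::'a::{field,finite}))"
proof -
  have "add_char (- c) * add_char c = 1"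
    using add_char_add[of "- c" c] by simp
  moreover have "cnj (add_char c) * add_char c = 1"
    using complex_norm_square[of "add_char c"] by (simp add: mult.commute)
  moreover have "add_char c \<noteq> 0"
    using norm_add_char[of c] by (metis norm_zero zero_neq_one)
  ultimately show ?thesis
    by (metis mult_cancel_right)
qed

lemma add_char_diff: "add_char (a - b) = add_char a * cnj (add_char (b::'a::{field,finite}))"
  using add_char_add[of a "- b"] by (simp add: add_char_uminus)

lemma add_char_sum: "add_char (\<Sum>i\<in>A. f i) = (\<Prod>i\<in>A. add_char (f i :: 'a::{field,finite}))"
  by (induction A rule: infinite_finite_induct) (simp_all add: add_char_add)

lemma add_char_nontrivial: "\<exists>c::'a::{field,finite}. add_char c \<noteq> 1"
proof -
  obtain c :: 'a where "ff_trace c \<noteq> 0"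
    using ff_trace_nonzero by blast
  then have k: "0 < ff_trace_nat c" "ff_trace_nat c < CHAR('a)"
    using ff_trace_nat_less[of c] of_nat_ff_trace_nat[of c] by (auto intro!: gr0I)
  have "add_char c \<noteq> 1"
  proof
    assume "add_char c = 1"
    then have "cos (2 * pi * (real (ff_trace_nat c) / CHAR('a))) = 1"
      by (simp add: add_char_eq_cis complex_eq_iff)
    then obtain m :: int where m: "2 * pi * (real (ff_trace_nat c) / CHAR('a)) = m * 2 * pi"
      by (auto simp: cos_one_2pi_int)
    have "real (ff_trace_nat c) / CHAR('a) = 2 * pi * (real (ff_trace_nat c) / CHAR('a)) / (2 * pi)"
      by simp
    then have "real (ff_trace_nat c) / CHAR('a) = m"
      by (simp only: m) simp
    moreover have "0 < real (ff_trace_nat c) / CHAR('a)" "real (ff_trace_nat c) / CHAR('a) < 1"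
      using k by auto
    ultimately show False
      by simp
  qed
  then show ?thesis
    by blast
qed

lemma sum_add_char_mult:
  "(\<Sum>t\<in>UNIV. add_char (a * t)) = (if a = 0 then of_nat CARD('a) else (0::complex))"
  for a :: "'a::{field,finite}"
proof (cases "a = 0")
  case False
  obtain c :: 'a where c: "add_char c \<noteq> 1"
    using add_char_nontrivial by blast
  have "(\<Sum>t\<in>UNIV. add_char (a * t)) = (\<Sum>t\<in>UNIV. add_char (t::'a))"
    using False by (intro sum.reindex_bij_witness[where i="\<lambda>t. t / a" and j="\<lambda>t. a * t"]) auto
  also have "\<dots> = 0"
  proof -
    have "(\<Sum>t\<in>UNIV. add_char (t::'a)) = (\<Sum>t\<in>UNIV. add_char (t + c))"
      by (rule sum.reindex_bij_witness[of _ "\<lambda>t. t + c" "\<lambda>t. t - c"]) auto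
    also have "\<dots> = (\<Sum>t\<in>UNIV. add_char (t::'a)) * add_char c"
      by (simp add: add_char_add sum_distrib_right)
    finally show ?thesis
      using c by simp
  qed
  finally show ?thesis
    using False by simp
qed simp

section \<open>The quadratic character\<close>

lemma two_neq_zero_if_CHAR_neq_2:
  assumes "CHAR('a::{semiring_1,zero_neq_one}) \<noteq> 2"
  shows "(2::'a) \<noteq> 0"
proof
  assume "(2::'a) = 0"
  then have "CHAR('a) dvd 2"
    using of_nat_eq_0_iff_char_dvd[of 2, where 'a='a] by simp
  then show False
    using assms CHAR_not_1[where 'a='a] dvd_imp_le[of "CHAR('a)" 2]
    by (cases "CHAR('a)") (auto simp: le_Suc_eq)
qed

lemma four_neq_zero_if_CHAR_neq_2:
  assumes "CHAR('a::field) \<noteq> 2"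
  shows "(4::'a) \<noteq> 0"
  using two_neq_zero_if_CHAR_neq_2[OF assms] mult_eq_0_iff[of "2::'a" 2] by simp

lemma card_square_roots:
  assumes "CHAR('a::{field,finite}) \<noteq> 2"
  shows "int (card {x::'a. x^2 = t}) = 1 + qchar t"
proof (cases "\<exists>b. b^2 = t")
  case True
  then obtain b where b: "b^2 = t"
    by blast
  then have "{x. x^2 = t} = {b, -b}"
    by (auto simp: power2_eq_iff)
  moreover have "b = - b \<longleftrightarrow> t = 0"
    using b two_neq_zero_if_CHAR_neq_2[OF assms] by auto
  ultimately show ?thesis
    using True by (auto simp: qchar_def)
next
  case False
  then have "t \<noteq> 0"
    by (metis zero_power2)
  with False show ?thesis
    by (simp add: qchar_def)
qed

lemma sum_qchar_eq_0:
  assumes "CHAR('a::{field,finite}) \<noteq> 2"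
  shows "(\<Sum>t\<in>UNIV. qchar (t::'a)) = 0"
proof -
  have "(\<Sum>t\<in>UNIV. card {x::'a. x^2 = t}) = CARD('a)"
    using sum.group[of UNIV UNIV "\<lambda>x::'a. x^2" "\<lambda>_. 1::nat"] by simp
  then have "(\<Sum>t\<in>UNIV. 1 + qchar (t::'a)) = int CARD('a)"
    by (simp flip: card_square_roots[OF assms] of_nat_sum)
  then show ?thesis
    by (simp add: sum.distrib)
qed

lemma card_qchar_1_eq_card_qchar_minus_1:
  assumes "CHAR('a::{field,finite}) \<noteq> 2"
  shows "card {t::'a. qchar t = 1} = card {t::'a. qchar t = -1}"
proof -
  have "(\<Sum>t\<in>UNIV. qchar (t::'a)) = (\<Sum>t\<in>UNIV. of_bool (qchar (t::'a) = 1) - of_bool (qchar t = -1))"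
    by (intro sum.cong refl) (simp add: qchar_def)
  also have "\<dots> = int (card {t::'a. qchar t = 1}) - int (card {t::'a. qchar t = -1})"
    by (simp add: sum_subtractf)
  finally show ?thesis
    using sum_qchar_eq_0[OF assms] by simp
qed

lemma qchar_mult_square:
  assumes "c \<noteq> 0"
  shows "qchar (c^2 * b) = qchar (b::'a::{field,finite})"
proof -
  have "(\<exists>x. x^2 = c^2 * b) \<longleftrightarrow> (\<exists>x. x^2 = b)"
  proof
    assume "\<exists>x. x^2 = c^2 * b"
    then obtain x where "x^2 = c^2 * b"
      by blast
    then have "(x / c)^2 = b"
      using assms by (simp add: power_divide)
    then show "\<exists>x. x^2 = b" ..
  next
    assume "\<exists>x. x^2 = b"
    then obtain x where "x^2 = b"
      by blast
    then have "(c * x)^2 = c^2 * b"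
      by (simp add: power_mult_distrib)
    then show "\<exists>x. x^2 = c^2 * b" ..
  qed
  then show ?thesis
    using assms by (simp add: qchar_def)
qed

lemma qchar_eq_1_iff: "qchar t = 1 \<longleftrightarrow> (\<exists>c. c \<noteq> 0 \<and> t = c^2)"
  by (auto simp: qchar_def)

text \<open>Multiplication by a non-square maps the squares injectively into the non-squares, and there
  are equally many of each, so it maps them onto the non-squares.\<close>
lemma qchar_mult_nonsquares:
  assumes "CHAR('a::{field,finite}) \<noteq> 2" "qchar a = -1" "qchar b = -1"
  shows "qchar (a * b :: 'a) = 1"
proof -
  let ?S = "{t::'a. qchar t = 1}" and ?N = "{t::'a. qchar t = -1}"
  have "a \<noteq> 0"
    using assms(2) by (auto simp: qchar_def)
  have "(\<lambda>s. a * s) ` ?S \<subseteq> ?N"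
  proof
    fix x assume "x \<in> (\<lambda>s. a * s) ` ?S"
    then obtain c where "c \<noteq> 0" "x = c^2 * a"
      unfolding qchar_eq_1_iff by (auto simp: mult.commute)
    then show "x \<in> ?N"
      using qchar_mult_square[of c a] assms(2) by simp
  qed
  moreover have "card ((\<lambda>s. a * s) ` ?S) = card ?N"
    using \<open>a \<noteq> 0\<close> card_qchar_1_eq_card_qchar_minus_1[OF assms(1)]
    by (simp add: card_image inj_on_def)
  ultimately have "(\<lambda>s. a * s) ` ?S = ?N"
    by (intro card_subset_eq) auto
  then have "b \<in> (\<lambda>s. a * s) ` ?S"
    using assms(3) by simp
  then obtain c where "c \<noteq> 0" "b = a * c^2"
    unfolding qchar_eq_1_iff by blast
  then have "a * b = (a * c)^2" "a * c \<noteq> 0"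
    using \<open>a \<noteq> 0\<close> by (simp_all add: power2_eq_square)
  then show ?thesis
    unfolding qchar_eq_1_iff by blast
qed

lemma qchar_cases: "qchar x = 0 \<or> qchar x = 1 \<or> qchar x = -1"
  by (simp add: qchar_def)

lemma qchar_eq_0_iff [simp]: "qchar x = 0 \<longleftrightarrow> x = 0"
  by (simp add: qchar_def)

lemma qchar_mult:
  assumes "CHAR('a::{field,finite}) \<noteq> 2"
  shows "qchar (a * b) = qchar a * qchar (b::'a)"
proof -
  have square: "qchar (a * b) = qchar a * qchar b" if "qchar a = 1" for a b :: 'a
  proof -
    obtain c where "c \<noteq> 0" "a = c^2"
      using \<open>qchar a = 1\<close> by (auto simp: qchar_def split: if_splits)
    then show ?thesis
      using that qchar_mult_square[of c b] by simp
  qed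
  consider "qchar a = 0" | "qchar b = 0" | "qchar a = 1" | "qchar b = 1" | "qchar a = -1" "qchar b = -1"
    using qchar_cases by blast
  then show ?thesis
  proof cases
    case 3
    then show ?thesis
      by (rule square)
  next
    case 4
    then show ?thesis
      using square[of b a] by (simp add: mult.commute)
  next
    case 5
    then show ?thesis
      using qchar_mult_nonsquares[OF assms] by simp
  qed simp_all
qed

lemma qchar_inverse: "qchar (inverse x) = qchar (x::'a::{field,finite})"
proof (cases "x = 0")
  case False
  then have "inverse x = (inverse x)^2 * x"
    by (simp add: power2_eq_square)
  then show ?thesis
    using qchar_mult_square[of "inverse x" x] False by simp
qed simp

section \<open>Gauss sums\<close>

definition gauss_sum :: "'a::{field,finite} \<Rightarrow> complex" where
  "gauss_sum a = (\<Sum>x\<in>UNIV. add_char (a * x^2))"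

lemma gauss_sum_eq_sum_qchar:
  assumes "CHAR('a::{field,finite}) \<noteq> 2" "(a::'a) \<noteq> 0"
  shows "gauss_sum a = (\<Sum>t\<in>UNIV. of_int (qchar t) * add_char (a * t))"
proof -
  have "gauss_sum a = (\<Sum>t\<in>UNIV. \<Sum>x\<in>{x\<in>UNIV. x^2 = t}. add_char (a * x^2))"
    unfolding gauss_sum_def by (rule sum.group[symmetric]) auto
  also have "\<dots> = (\<Sum>t\<in>UNIV. of_int (int (card {x::'a. x^2 = t})) * add_char (a * t))"
    by simp
  also have "\<dots> = (\<Sum>t\<in>UNIV. add_char (a * t)) + (\<Sum>t\<in>UNIV. of_int (qchar t) * add_char (a * t))"
    by (simp add: card_square_roots[OF assms(1)] distrib_right sum.distrib)
  finally show ?thesis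
    using assms(2) by (simp add: sum_add_char_mult)
qed

lemma gauss_sum_mult:
  assumes "CHAR('a::{field,finite}) \<noteq> 2" "(a::'a) \<noteq> 0" "b \<noteq> 0"
  shows "gauss_sum (a * b) = of_int (qchar a) * gauss_sum b"
proof -
  have "gauss_sum (a * b) = (\<Sum>t\<in>UNIV. of_int (qchar t) * add_char (a * b * t))"
    using assms by (simp add: gauss_sum_eq_sum_qchar)
  also have "\<dots> = (\<Sum>u\<in>UNIV. of_int (qchar (u / a)) * add_char (b * u))"
    using assms(2)
    by (intro sum.reindex_bij_witness[where j="\<lambda>u. a * u" and i="\<lambda>u. u / a"]) (auto simp: mult_ac)
  also have "\<dots> = of_int (qchar a) * (\<Sum>u\<in>UNIV. of_int (qchar u) * add_char (b * u))"
    by (simp add: sum_distrib_left divide_inverse qchar_mult[OF assms(1)] qchar_inverse mult_ac)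
  also have "\<dots> = of_int (qchar a) * gauss_sum b"
    using assms by (simp add: gauss_sum_eq_sum_qchar)
  finally show ?thesis .
qed

lemma gauss_sum_uminus: "gauss_sum (- a) = cnj (gauss_sum a)"
  by (simp add: gauss_sum_def add_char_uminus[symmetric])

text \<open>Substituting \<open>x = y + u\<close> turns \<open>a (x^2 - y^2)\<close> into \<open>a u^2 + 2 a u y\<close>, which is linear in \<open>y\<close>.\<close>
lemma gauss_sum_times_uminus:
  assumes "CHAR('a::{field,finite}) \<noteq> 2" "(a::'a) \<noteq> 0"
  shows "gauss_sum a * gauss_sum (- a) = of_nat CARD('a)"
proof -
  have "gauss_sum a * gauss_sum (- a) = (\<Sum>x\<in>UNIV. \<Sum>y\<in>UNIV. add_char (a * x^2 - a * y^2))"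
    by (simp add: gauss_sum_def sum_product add_char_diff add_char_uminus)
  also have "\<dots> = (\<Sum>y\<in>UNIV. \<Sum>x\<in>UNIV. add_char (a * x^2 - a * y^2))"
    by (rule sum.swap)
  also have "\<dots> = (\<Sum>y\<in>UNIV. \<Sum>u\<in>UNIV. add_char (a * (y + u)^2 - a * y^2))"
  proof (rule sum.cong[OF refl])
    fix y :: 'a
    show "(\<Sum>x\<in>UNIV. add_char (a * x^2 - a * y^2)) = (\<Sum>u\<in>UNIV. add_char (a * (y + u)^2 - a * y^2))"
      by (rule sum.reindex_bij_witness[where j="\<lambda>x. x - y" and i="\<lambda>u. y + u"]) auto
  qed
  also have "\<dots> = (\<Sum>u\<in>UNIV. add_char (a * u^2) * (\<Sum>y\<in>UNIV. add_char ((2 * a * u) * y)))"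
    by (subst sum.swap) (simp add: sum_distrib_left add_char_add[symmetric] power2_eq_square algebra_simps)
  also have "\<dots> = (\<Sum>u\<in>{0::'a}. of_nat CARD('a))"
    by (rule sum.mono_neutral_cong_right)
      (use assms two_neq_zero_if_CHAR_neq_2[OF assms(1)] in \<open>auto simp: sum_add_char_mult\<close>)
  finally show ?thesis
    by simp
qed

lemma norm_gauss_sum:
  assumes "CHAR('a::{field,finite}) \<noteq> 2" "(a::'a) \<noteq> 0"
  shows "cmod (gauss_sum a) = sqrt CARD('a)"
proof -
  have "complex_of_real ((cmod (gauss_sum a))^2) = of_nat CARD('a)"
    using gauss_sum_times_uminus[OF assms] complex_norm_square[of "gauss_sum a"]
    by (simp add: gauss_sum_uminus)
  then have "(cmod (gauss_sum a))^2 = CARD('a)"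
    by (metis of_real_eq_iff of_real_of_nat_eq)
  then show ?thesis
    by (simp add: real_sqrt_unique)
qed

lemma sum_add_char_quadratic:
  assumes "CHAR('a::{field,finite}) \<noteq> 2" "(a::'a) \<noteq> 0"
  shows "(\<Sum>t\<in>UNIV. add_char (a * t^2 - b * t)) = add_char (- (b^2 / (4 * a))) * gauss_sum a"
proof -
  define e where "e = b / (2 * a)"
  have b: "b = 2 * a * e" and "4 * a \<noteq> 0"
    using assms two_neq_zero_if_CHAR_neq_2[OF assms(1)] four_neq_zero_if_CHAR_neq_2[OF assms(1)]
    by (simp_all add: e_def)
  then have "b^2 / (4 * a) = a * e^2"
    by (simp add: b power2_eq_square field_simps)
  then have "a * t^2 - b * t = a * (t - e)^2 - b^2 / (4 * a)" for t
    by (simp add: b power2_eq_square algebra_simps)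
  then have "(\<Sum>t\<in>UNIV. add_char (a * t^2 - b * t)) = (\<Sum>t\<in>UNIV. add_char (a * (t - e)^2 - b^2 / (4 * a)))"
    by simp
  also have "\<dots> = (\<Sum>t\<in>UNIV. add_char (a * t^2 - b^2 / (4 * a)))"
    by (rule sum.reindex_bij_witness[where j="\<lambda>t. t - e" and i="\<lambda>t. t + e"]) auto
  also have "\<dots> = (\<Sum>t\<in>UNIV. add_char (- (b^2 / (4 * a))) * add_char (a * t^2))"
    by (simp add: add_char_add[symmetric])
  also have "\<dots> = add_char (- (b^2 / (4 * a))) * gauss_sum a"
    by (simp add: gauss_sum_def sum_distrib_left)
  finally show ?thesis .
qed

lemma sum_add_char_divide:
  "(\<Sum>s\<in>UNIV - {0}. add_char (c / (s::'a::{field,finite}))) = (if c = 0 then of_nat CARD('a) - 1 else -1)"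
proof -
  have "(\<Sum>s\<in>UNIV - {0}. add_char (c / (s::'a))) = (\<Sum>u\<in>UNIV - {0}. add_char (c * u))"
    by (rule sum.reindex_bij_witness[where i=inverse and j=inverse]) (auto simp: divide_inverse)
  also have "\<dots> = (\<Sum>u\<in>UNIV. add_char (c * u)) - 1"
    by (simp add: sum_diff1)
  finally show ?thesis
    by (simp add: sum_add_char_mult)
qed

lemma sum_qchar_add_char_divide:
  assumes "CHAR('a::{field,finite}) \<noteq> 2"
  shows "(\<Sum>s\<in>UNIV - {0}. of_int (qchar s) * add_char (c / (s::'a))) = (if c = 0 then 0 else gauss_sum c)"
proof -
  have "(\<Sum>s\<in>UNIV - {0}. of_int (qchar s) * add_char (c / (s::'a)))
      = (\<Sum>u\<in>UNIV - {0}. of_int (qchar u) * add_char (c * u))"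
    by (rule sum.reindex_bij_witness[where i=inverse and j=inverse]) (auto simp: qchar_inverse divide_inverse)
  also have "\<dots> = (\<Sum>u\<in>UNIV. of_int (qchar u) * add_char (c * u))"
    by (intro sum.mono_neutral_left) auto
  finally show ?thesis
    using gauss_sum_eq_sum_qchar[OF assms, of c] sum_qchar_eq_0[OF assms]
    by (simp flip: of_int_sum)
qed

section \<open>Fourier analysis on \<open>\<bbbF>\<^sub>q\<^sup>d\<close>\<close>

lemma finite_vecs [simp]: "finite (vecs d :: (nat \<Rightarrow> 'a::finite) set)"
  by (simp add: vecs_def finite_PiE)

lemma restrict_in_vecs [simp]: "restrict z {..<d} \<in> vecs d"
  by (simp add: vecs_def)

lemma vecs_eq_restrict_iff: "z \<in> vecs d \<Longrightarrow> (\<forall>i<d. z i = w i) \<longleftrightarrow> z = restrict w {..<d}"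
  by (auto simp: vecs_def PiE_def extensional_def fun_eq_iff)

lemma vecs_eq_iff: "x \<in> vecs d \<Longrightarrow> y \<in> vecs d \<Longrightarrow> x = y \<longleftrightarrow> (\<forall>i<d. x i = y i)"
  by (simp add: vecs_eq_restrict_iff vecs_def)

lemma dotp_diff: "dotp d m (\<lambda>i. x i - y i) = dotp d m x - dotp d m y"
  by (simp add: dotp_def sum_subtractf right_diff_distrib)

lemma sum_vecs_add_char:
  fixes f :: "nat \<Rightarrow> 'a \<Rightarrow> 'a::{field,finite}"
  shows "(\<Sum>z\<in>vecs d. add_char (\<Sum>i<d. f i (z i))) = (\<Prod>i<d. \<Sum>t\<in>UNIV. add_char (f i t))"
  unfolding vecs_def add_char_sum by (rule prod_sum_PiE[symmetric]) auto

lemma sum_vecs_add_char_dotp: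
  "(\<Sum>m\<in>vecs d. add_char (dotp d m w)) = (if \<forall>i<d. w i = 0 then of_nat (CARD('a) ^ d) else 0)"
  for w :: "nat \<Rightarrow> 'a::{field,finite}"
proof -
  have "(\<Sum>m\<in>vecs d. add_char (dotp d m w)) = (\<Prod>i<d. \<Sum>t\<in>UNIV. add_char (w i * t))"
    unfolding dotp_def using sum_vecs_add_char[where f="\<lambda>i t. w i * t"] by (simp add: mult.commute)
  also have "\<dots> = (\<Prod>i<d. if w i = 0 then of_nat CARD('a) else 0)"
    by (simp add: sum_add_char_mult)
  also have "\<dots> = (if \<forall>i<d. w i = 0 then of_nat (CARD('a) ^ d) else 0)"
    by auto
  finally show ?thesis .
qed

definition fourier_transform ::
    "nat \<Rightarrow> ((nat \<Rightarrow> 'a::{field,finite}) \<Rightarrow> complex) \<Rightarrow> (nat \<Rightarrow> 'a) \<Rightarrow> complex" where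
  "fourier_transform d g m = (1 / of_nat (CARD('a) ^ d)) * (\<Sum>z\<in>vecs d. g z * add_char (- dotp d m z))"

lemma fourier_inversion:
  fixes g :: "(nat \<Rightarrow> 'a::{field,finite}) \<Rightarrow> complex"
  assumes g: "\<And>z z'. \<forall>i<d. z i = z' i \<Longrightarrow> g z = g z'"
  shows "g w = (\<Sum>m\<in>vecs d. fourier_transform d g m * add_char (dotp d m w))"
proof -
  let ?q = "of_nat (CARD('a) ^ d) :: complex"
  have "fourier_transform d g m * add_char (dotp d m w)
      = (\<Sum>z\<in>vecs d. g z * add_char (dotp d m (\<lambda>i. w i - z i))) / ?q" for m
    by (simp add: fourier_transform_def sum_distrib_left sum_distrib_right sum_divide_distrib
        add_char_diff add_char_uminus mult_ac dotp_diff)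
  then have "(\<Sum>m\<in>vecs d. fourier_transform d g m * add_char (dotp d m w))
      = (\<Sum>m\<in>vecs d. \<Sum>z\<in>vecs d. g z * add_char (dotp d m (\<lambda>i. w i - z i))) / ?q"
    by (simp add: sum_divide_distrib)
  also have "\<dots> = (\<Sum>z\<in>vecs d. g z * (\<Sum>m\<in>vecs d. add_char (dotp d m (\<lambda>i. w i - z i)))) / ?q"
    by (subst sum.swap) (simp add: sum_distrib_left)
  also have "\<dots> = (\<Sum>z\<in>vecs d. if z = restrict w {..<d} then g z * ?q else 0) / ?q"
  proof (intro arg_cong[where f="\<lambda>x. x / ?q"] sum.cong refl)
    fix z :: "nat \<Rightarrow> 'a" assume "z \<in> vecs d"
    then have "(\<forall>i<d. w i - z i = 0) \<longleftrightarrow> z = restrict w {..<d}"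
      using vecs_eq_restrict_iff[of z d w] by auto
    then show "g z * (\<Sum>m\<in>vecs d. add_char (dotp d m (\<lambda>i. w i - z i)))
        = (if z = restrict w {..<d} then g z * ?q else 0)"
      by (simp add: sum_vecs_add_char_dotp)
  qed
  also have "\<dots> = g w"
    using g[of "restrict w {..<d}" w] by simp
  finally show ?thesis ..
qed

lemma sum_add_char_dotp_eq_fourier:
  fixes E :: "(nat \<Rightarrow> 'a::{field,finite}) set"
  shows "(\<Sum>x\<in>E. add_char (dotp d m x)) = of_nat (CARD('a) ^ d) * cnj (fourier d E m)"
  by (simp add: fourier_def add_char_uminus)

lemma sum_pairs_eq_sum_fourier:
  fixes g :: "(nat \<Rightarrow> 'a::{field,finite}) \<Rightarrow> complex" and E :: "(nat \<Rightarrow> 'a) set"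
  assumes g: "\<And>z z'. \<forall>i<d. z i = z' i \<Longrightarrow> g z = g z'"
  shows "(\<Sum>x\<in>E. \<Sum>y\<in>E. g (\<lambda>i. x i - y i))
    = of_nat (CARD('a) ^ d) ^ 2 * (\<Sum>m\<in>vecs d. fourier_transform d g m * complex_of_real ((cmod (fourier d E m))\<^sup>2))"
proof -
  let ?g = "fourier_transform d g" and ?\<chi> = "\<lambda>m x. add_char (dotp d m x)"
  have "(\<Sum>x\<in>E. \<Sum>y\<in>E. g (\<lambda>i. x i - y i)) = (\<Sum>x\<in>E. \<Sum>y\<in>E. \<Sum>m\<in>vecs d. ?g m * (?\<chi> m x * cnj (?\<chi> m y)))"
    by (subst fourier_inversion[where d=d, OF g]) (simp_all add: add_char_diff dotp_diff)
  also have "\<dots> = (\<Sum>x\<in>E. \<Sum>m\<in>vecs d. \<Sum>y\<in>E. ?g m * (?\<chi> m x * cnj (?\<chi> m y)))"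
    by (subst (2) sum.swap) (rule refl)
  also have "\<dots> = (\<Sum>m\<in>vecs d. \<Sum>x\<in>E. \<Sum>y\<in>E. ?g m * (?\<chi> m x * cnj (?\<chi> m y)))"
    by (rule sum.swap)
  also have "\<dots> = (\<Sum>m\<in>vecs d. ?g m * ((\<Sum>x\<in>E. ?\<chi> m x) * cnj (\<Sum>y\<in>E. ?\<chi> m y)))"
    by (simp only: cnj_sum sum_product) (simp only: sum_distrib_left)
  also have "\<dots> = (\<Sum>m\<in>vecs d. ?g m * (of_nat (CARD('a) ^ d) ^ 2 * complex_of_real ((cmod (fourier d E m))\<^sup>2)))"
  proof (intro sum.cong refl arg_cong[where f="\<lambda>x. ?g _ * x"])
    fix m
    have "(\<Sum>x\<in>E. ?\<chi> m x) * cnj (\<Sum>y\<in>E. ?\<chi> m y) = of_nat (CARD('a) ^ d) ^ 2 * (cnj (fourier d E m) * fourier d E m)"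
      by (simp add: sum_add_char_dotp_eq_fourier power2_eq_square mult_ac)
    then show "(\<Sum>x\<in>E. ?\<chi> m x) * cnj (\<Sum>y\<in>E. ?\<chi> m y) = of_nat (CARD('a) ^ d) ^ 2 * complex_of_real ((cmod (fourier d E m))\<^sup>2)"
      by (simp only: complex_norm_square mult.commute[of "cnj _"])
  qed
  finally show ?thesis
    by (simp add: sum_distrib_left mult_ac)
qed

lemma sum_norm_fourier_squared:
  fixes E :: "(nat \<Rightarrow> 'a::{field,finite}) set"
  assumes E: "E \<subseteq> vecs d"
  shows "(\<Sum>m\<in>vecs d. (cmod (fourier d E m))\<^sup>2) = card E / real CARD('a) ^ d"
proof -
  define \<delta> :: "(nat \<Rightarrow> 'a) \<Rightarrow> complex" where "\<delta> z = of_bool (\<forall>i<d. z i = 0)" for z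
  have "finite E"
    using E by (rule finite_subset) simp
  have "(\<forall>i<d. x i - y i = 0) \<longleftrightarrow> y = x" if "x \<in> E" "y \<in> E" for x y
    using that E vecs_eq_iff[of x d y] by auto
  then have "(\<Sum>x\<in>E. \<Sum>y\<in>E. \<delta> (\<lambda>i. x i - y i)) = of_nat (card E)"
    using \<open>finite E\<close> by (simp add: \<delta>_def of_bool_def sum.If_cases)
  moreover have "fourier_transform d \<delta> m = 1 / of_nat (CARD('a) ^ d)" for m
  proof -
    have "\<delta> z * add_char (- dotp d m z) = (if z = restrict (\<lambda>_. 0) {..<d} then 1 else 0)"
      if "z \<in> vecs d" for z
      using that vecs_eq_restrict_iff[of z d "\<lambda>_. 0"] by (auto simp: \<delta>_def dotp_def)
    then show ?thesis
      by (simp add: fourier_transform_def)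
  qed
  ultimately have "complex_of_real (card E) = complex_of_real (real CARD('a) ^ d * (\<Sum>m\<in>vecs d. (cmod (fourier d E m))\<^sup>2))"
    using sum_pairs_eq_sum_fourier[of d \<delta> E] by (simp add: \<delta>_def power2_eq_square sum_distrib_left)
  then show ?thesis
    unfolding of_real_eq_iff by (simp add: field_simps)
qed

section \<open>Exponential sums of the quadratic form\<close>

definition qform_coeff :: "nat \<Rightarrow> 'a::field \<Rightarrow> nat \<Rightarrow> 'a" where
  "qform_coeff d e i = (if i < d - 1 then (-1) ^ i else if even d then - e else e)"

lemma qform_eq_sum_coeff:
  assumes "1 \<le> d"
  shows "qform d e x = (\<Sum>i<d. qform_coeff d e i * x i ^ 2)"
proof -
  have "{..<d} = insert (d - 1) {..<d - 1}"
    using assms by auto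
  then show ?thesis
    by (simp add: qform_def qform_coeff_def)
qed

lemma qform_coeff_inverse: "qform_coeff d (inverse e) i = inverse (qform_coeff d e i :: 'a::field)"
  by (simp add: qform_coeff_def flip: power_inverse)

lemma qform_coeff_nonzero: "e \<noteq> 0 \<Longrightarrow> qform_coeff d e i \<noteq> (0::'a::field)"
  by (simp add: qform_coeff_def)

lemma sum_vecs_add_char_qform:
  fixes e :: "'a::{field,finite}"
  assumes char: "CHAR('a) \<noteq> 2" and s: "s \<noteq> 0" and e: "e \<noteq> 0" and d: "1 \<le> d"
  shows "(\<Sum>z\<in>vecs d. add_char (s * qform d e z - dotp d m z))
    = add_char (- (qform d (inverse e) m / (4 * s))) * (\<Prod>i<d. gauss_sum (s * qform_coeff d e i))"
proof -
  let ?c = "qform_coeff d e"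
  have "(\<Sum>z\<in>vecs d. add_char (s * qform d e z - dotp d m z))
      = (\<Sum>z\<in>vecs d. add_char (\<Sum>i<d. (s * ?c i) * z i ^ 2 - m i * z i))"
    by (simp add: qform_eq_sum_coeff[OF d] dotp_def sum_subtractf sum_distrib_left mult.assoc)
  also have "\<dots> = (\<Prod>i<d. \<Sum>t\<in>UNIV. add_char ((s * ?c i) * t ^ 2 - m i * t))"
    by (rule sum_vecs_add_char[where f="\<lambda>i t. (s * ?c i) * t ^ 2 - m i * t"])
  also have "\<dots> = (\<Prod>i<d. add_char (- (m i ^ 2 / (4 * (s * ?c i)))) * gauss_sum (s * ?c i))"
    by (intro prod.cong refl sum_add_char_quadratic[OF char]) (simp add: s qform_coeff_nonzero[OF e])
  also have "\<dots> = add_char (\<Sum>i<d. - (m i ^ 2 / (4 * (s * ?c i)))) * (\<Prod>i<d. gauss_sum (s * ?c i))"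
    by (simp add: prod.distrib add_char_sum)
  also have "(\<Sum>i<d. - (m i ^ 2 / (4 * (s * ?c i)))) = (\<Sum>i<d. - (qform_coeff d (inverse e) i * m i ^ 2 / (4 * s)))"
    unfolding qform_coeff_inverse using qform_coeff_nonzero[OF e] s
    by (intro sum.cong refl) (simp add: field_simps)
  also have "\<dots> = - (qform d (inverse e) m / (4 * s))"
    by (simp add: qform_eq_sum_coeff[OF d] sum_divide_distrib sum_negf)
  finally show ?thesis .
qed

lemma prod_gauss_sum_alternating:
  assumes "CHAR('a::{field,finite}) \<noteq> 2" "(s::'a) \<noteq> 0"
  shows "(\<Prod>i<2 * k. gauss_sum (s * (-1) ^ i)) = of_nat CARD('a) ^ k"
proof (induction k)
  case (Suc k)
  have "(\<Prod>i<2 * Suc k. gauss_sum (s * (-1) ^ i)) = (\<Prod>i<2 * k. gauss_sum (s * (-1) ^ i)) * (gauss_sum s * gauss_sum (- s))"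
    by (simp add: power_mult mult.assoc)
  then show ?case
    by (simp add: Suc.IH gauss_sum_times_uminus[OF assms])
qed simp

lemma prod_gauss_sum_qform_coeff_even:
  assumes char: "CHAR('a::{field,finite}) \<noteq> 2" and s: "(s::'a) \<noteq> 0" and e: "e \<noteq> 0"
    and d: "even d" "2 \<le> d"
  shows "(\<Prod>i<d. gauss_sum (s * qform_coeff d e i)) = of_int (qchar e) * of_nat CARD('a) ^ (d div 2)"
proof -
  define k where "k = d div 2 - 1"
  have k: "d = Suc (Suc (2 * k))"
    using d unfolding k_def by presburger
  have "(\<Prod>i<d. gauss_sum (s * qform_coeff d e i))
      = (\<Prod>i<2 * k. gauss_sum (s * qform_coeff d e i)) * gauss_sum (s * qform_coeff d e (2 * k))
          * gauss_sum (s * qform_coeff d e (Suc (2 * k)))"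
    by (simp add: k)
  also have "(\<Prod>i<2 * k. gauss_sum (s * qform_coeff d e i)) = of_nat CARD('a) ^ k"
    using prod_gauss_sum_alternating[OF char s, of k] by (simp add: qform_coeff_def k)
  also have "qform_coeff d e (2 * k) = 1"
    by (simp add: qform_coeff_def k)
  also have "qform_coeff d e (Suc (2 * k)) = - e"
    by (simp add: qform_coeff_def k)
  also have "gauss_sum (s * - e) = of_int (qchar e) * gauss_sum (- s)"
    using gauss_sum_mult[OF char e, of "- s"] s by (simp add: mult.commute)
  also have "of_nat CARD('a) ^ k * gauss_sum (s * 1) * (of_int (qchar e) * gauss_sum (- s))
      = of_int (qchar e) * of_nat CARD('a) ^ k * (gauss_sum s * gauss_sum (- s))"
    by (simp add: mult_ac)
  finally show ?thesis
    using k by (simp add: gauss_sum_times_uminus[OF char s])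
qed

lemma prod_gauss_sum_qform_coeff_odd:
  assumes char: "CHAR('a::{field,finite}) \<noteq> 2" and s: "(s::'a) \<noteq> 0" and d: "odd d"
  shows "(\<Prod>i<d. gauss_sum (s * qform_coeff d e i)) = of_nat CARD('a) ^ (d div 2) * gauss_sum (s * e)"
proof -
  obtain k where k: "d = 2 * k + 1"
    using d oddE by blast
  then have "(\<Prod>i<d. gauss_sum (s * qform_coeff d e i)) = (\<Prod>i<2 * k. gauss_sum (s * (-1) ^ i)) * gauss_sum (s * e)"
    by (simp add: qform_coeff_def)
  then show ?thesis
    using k prod_gauss_sum_alternating[OF char s, of k] by simp
qed

definition qform_char_sum :: "nat \<Rightarrow> 'a::{field,finite} \<Rightarrow> (nat \<Rightarrow> 'a) \<Rightarrow> complex" where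
  "qform_char_sum d e m = (\<Sum>s\<in>UNIV - {0}. \<Sum>z\<in>vecs d. add_char (s * qform d e z - dotp d m z))"

lemma qform_char_sum_eq:
  fixes e :: "'a::{field,finite}"
  assumes "CHAR('a) \<noteq> 2" "e \<noteq> 0" "1 \<le> d"
  shows "qform_char_sum d e m = (\<Sum>s\<in>UNIV - {0}.
    add_char (- (qform d (inverse e) m / 4) / s) * (\<Prod>i<d. gauss_sum (s * qform_coeff d e i)))"
  unfolding qform_char_sum_def using assms by (intro sum.cong refl) (simp add: sum_vecs_add_char_qform)

lemma qform_char_sum_even:
  fixes e :: "'a::{field,finite}"
  assumes char: "CHAR('a) \<noteq> 2" and e: "e \<noteq> 0" and d: "even d" "2 \<le> d"
  shows "qform_char_sum d e m = of_int (qchar e) * of_nat CARD('a) ^ (d div 2)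
    * ((if qform d (inverse e) m = 0 then of_nat CARD('a) else 0) - 1)"
proof -
  let ?c = "- (qform d (inverse e) m / 4)" and ?P = "of_int (qchar e) * of_nat CARD('a) ^ (d div 2)"
  have "1 \<le> d"
    using d by simp
  have "qform_char_sum d e m = (\<Sum>s\<in>UNIV - {0}. add_char (?c / s) * ?P)"
    using d unfolding qform_char_sum_eq[OF char e \<open>1 \<le> d\<close>]
    by (intro sum.cong refl) (simp add: prod_gauss_sum_qform_coeff_even[OF char _ e d])
  also have "\<dots> = (\<Sum>s\<in>UNIV - {0}. add_char (?c / s)) * ?P"
    by (rule sum_distrib_right[symmetric])
  also have "\<dots> = (if ?c = 0 then of_nat CARD('a) - 1 else - 1) * ?P"
    by (simp only: sum_add_char_divide)
  finally show ?thesis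
    using four_neq_zero_if_CHAR_neq_2[OF char] by (simp add: mult.commute)
qed

lemma norm_qform_char_sum_odd_le:
  fixes e :: "'a::{field,finite}"
  assumes char: "CHAR('a) \<noteq> 2" and e: "e \<noteq> 0" and d: "odd d"
  shows "cmod (qform_char_sum d e m) \<le> real CARD('a) ^ (d div 2 + 1)"
proof -
  let ?c = "- (qform d (inverse e) m / 4)" and ?P = "of_nat CARD('a) ^ (d div 2) * gauss_sum e"
  have "1 \<le> d"
    using d by presburger
  have "qform_char_sum d e m = (\<Sum>s\<in>UNIV - {0}. ?P * (of_int (qchar s) * add_char (?c / s)))"
    unfolding qform_char_sum_eq[OF char e \<open>1 \<le> d\<close>]
    by (intro sum.cong refl) (simp add: prod_gauss_sum_qform_coeff_odd[OF char _ d] gauss_sum_mult[OF char _ e])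
  also have "\<dots> = ?P * (\<Sum>s\<in>UNIV - {0}. of_int (qchar s) * add_char (?c / s))"
    by (rule sum_distrib_left[symmetric])
  also have "\<dots> = ?P * (if ?c = 0 then 0 else gauss_sum ?c)"
    by (simp only: sum_qchar_add_char_divide[OF char])
  finally have "cmod (qform_char_sum d e m)
      = real CARD('a) ^ (d div 2) * sqrt CARD('a) * cmod (if ?c = 0 then 0 else gauss_sum ?c)"
    by (simp add: norm_mult norm_power norm_gauss_sum[OF char e])
  also have "\<dots> \<le> real CARD('a) ^ (d div 2) * sqrt CARD('a) * sqrt CARD('a)"
    by (intro mult_left_mono) (auto simp: norm_gauss_sum[OF char])
  also have "\<dots> = real CARD('a) ^ (d div 2 + 1)"
    by simp
  finally show ?thesis .
qed

lemma fourier_transform_qform_eq_0: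
  fixes e :: "'a::{field,finite}"
  shows "fourier_transform d (\<lambda>z. of_bool (qform d e z = 0)) m
    = (of_bool (\<forall>i<d. m i = 0) + qform_char_sum d e m / of_nat (CARD('a) ^ d)) / of_nat CARD('a)"
proof -
  let ?q = "of_nat CARD('a) :: complex"
  have indicator: "of_bool (qform d e z = 0) = (\<Sum>s\<in>UNIV. add_char (s * qform d e z)) / ?q" for z
    using sum_add_char_mult[of "qform d e z"] by (simp add: mult.commute)
  have "(\<Sum>z\<in>vecs d. of_bool (qform d e z = 0) * add_char (- dotp d m z))
      = (\<Sum>s\<in>UNIV. \<Sum>z\<in>vecs d. add_char (s * qform d e z - dotp d m z)) / ?q"
    by (simp add: indicator sum_divide_distrib sum_distrib_right add_char_diff add_char_uminus
        sum.swap[of _ "vecs d" UNIV])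
  also have "\<dots> = ((\<Sum>z\<in>vecs d. add_char (dotp d z (- m))) + qform_char_sum d e m) / ?q"
    by (simp add: qform_char_sum_def sum.remove[of UNIV 0] dotp_def sum_negf mult.commute)
  also have "\<dots> = (of_nat (CARD('a) ^ d) * of_bool (\<forall>i<d. m i = 0) + qform_char_sum d e m) / ?q"
    by (simp add: sum_vecs_add_char_dotp)
  finally show ?thesis
    by (simp add: fourier_transform_def field_simps)
qed

section \<open>Pairs at distance zero\<close>

lemma wcount_eq_sum:
  assumes "finite E"
  shows "of_nat (wcount d e E t) = (\<Sum>x\<in>E. \<Sum>y\<in>E. of_bool (normQ d e (\<lambda>i. x i - y i) = t) :: 'b::comm_semiring_1)"
proof -
  have "{(x, y). x \<in> E \<and> y \<in> E \<and> normQ d e (\<lambda>i. x i - y i) = t}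
      = (E \<times> E) \<inter> {(x, y). normQ d e (\<lambda>i. x i - y i) = t}"
    by auto
  then show ?thesis
    using assms by (simp add: wcount_def sum.cartesian_product case_prod_beta flip: sum_of_bool_eq)
qed

lemma fourier_zero:
  fixes E :: "(nat \<Rightarrow> 'a::{field,finite}) set"
  shows "fourier d E (restrict (\<lambda>_. 0) {..<d}) = of_nat (card E) / of_nat (CARD('a) ^ d)"
  by (simp add: fourier_def dotp_def)

lemma sum_fourier_qform_eq_0:
  fixes E :: "(nat \<Rightarrow> 'a::{field,finite}) set"
  shows "(\<Sum>m\<in>vecs d. Re (fourier_transform d (\<lambda>z. of_bool (qform d e z = 0)) m) * (cmod (fourier d E m))\<^sup>2)
    = (real (card E) / real CARD('a) ^ d) ^ 2 / real CARD('a)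
      + (\<Sum>m\<in>vecs d. Re (qform_char_sum d e m) * (cmod (fourier d E m))\<^sup>2) / real CARD('a) ^ (d + 1)"
proof -
  let ?q = "real CARD('a)" and ?F = "\<lambda>m. (cmod (fourier d E m))\<^sup>2"
  let ?g = "\<lambda>z. of_bool (qform d e z = 0) :: complex" and ?z0 = "restrict (\<lambda>_. 0::'a) {..<d}"
  have "(\<Sum>m\<in>vecs d. Re (fourier_transform d ?g m) * ?F m)
      = (\<Sum>m\<in>vecs d. (if m = ?z0 then ?F ?z0 / ?q else 0) + Re (qform_char_sum d e m) * ?F m / ?q ^ (d + 1))"
  proof (rule sum.cong[OF refl])
    fix m :: "nat \<Rightarrow> 'a" assume "m \<in> vecs d"
    then have "(\<forall>i<d. m i = 0) \<longleftrightarrow> m = ?z0"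
      using vecs_eq_restrict_iff[of m d "\<lambda>_. 0"] by auto
    then show "Re (fourier_transform d ?g m) * ?F m
        = (if m = ?z0 then ?F ?z0 / ?q else 0) + Re (qform_char_sum d e m) * ?F m / ?q ^ (d + 1)"
      unfolding fourier_transform_qform_eq_0
      by (cases "m = ?z0") (simp_all add: field_simps flip: of_nat_power, blast)
  qed
  also have "\<dots> = ?F ?z0 / ?q + (\<Sum>m\<in>vecs d. Re (qform_char_sum d e m) * ?F m) / ?q ^ (d + 1)"
    by (simp add: sum.distrib sum_divide_distrib)
  also have "?F ?z0 = (real (card E) / ?q ^ d) ^ 2"
    by (simp add: fourier_zero norm_divide norm_power)
  finally show ?thesis .
qed

lemma wcount_zero_eq:
  fixes E :: "(nat \<Rightarrow> 'a::{field,finite}) set"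
  assumes d: "1 \<le> d" and E: "E \<subseteq> vecs d"
  shows "real (wcount d e E 0) = real (card E) ^ 2 / real CARD('a)
    + real CARD('a) ^ (d - 1) * (\<Sum>m\<in>vecs d. Re (qform_char_sum d e m) * (cmod (fourier d E m))\<^sup>2)"
proof -
  let ?q = "real CARD('a)" and ?F = "\<lambda>m. (cmod (fourier d E m))\<^sup>2"
  let ?g = "\<lambda>z. of_bool (qform d e z = 0) :: complex"
  let ?S = "\<Sum>m\<in>vecs d. Re (qform_char_sum d e m) * ?F m"
  have "finite E"
    using E by (rule finite_subset) simp
  have g: "?g z = ?g z'" if "\<forall>i<d. z i = z' i" for z z'
    using that by (simp add: qform_eq_sum_coeff[OF d])
  have "of_nat (wcount d e E 0) = (\<Sum>x\<in>E. \<Sum>y\<in>E. ?g (\<lambda>i. x i - y i))"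
    using \<open>finite E\<close> by (simp add: wcount_eq_sum normQ_def)
  also have "\<dots> = of_nat (CARD('a) ^ d) ^ 2 * (\<Sum>m\<in>vecs d. fourier_transform d ?g m * of_real (?F m))"
    by (rule sum_pairs_eq_sum_fourier) (rule g)
  finally have "real (wcount d e E 0) = ?q ^ (2 * d) * (\<Sum>m\<in>vecs d. Re (fourier_transform d ?g m) * ?F m)"
    by (auto dest: arg_cong[where f=Re] simp: power_mult mult.commute)
  also have "\<dots> = ?q ^ (2 * d) * (real (card E) / ?q ^ d) ^ 2 / ?q + ?q ^ (2 * d) * ?S / ?q ^ (d + 1)"
    by (simp only: sum_fourier_qform_eq_0 distrib_left times_divide_eq_right)
  also have "?q ^ (2 * d) * (real (card E) / ?q ^ d) ^ 2 = real (card E) ^ 2"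
  proof -
    have "?q ^ (2 * d) = (?q ^ d) ^ 2"
      by (simp add: mult.commute flip: power_mult)
    then show ?thesis
      by (simp add: power_divide)
  qed
  also have "?q ^ (2 * d) = ?q ^ (d - 1) * ?q ^ (d + 1)"
  proof -
    have "2 * d = (d - 1) + (d + 1)"
      using d by simp
    then show ?thesis
      by (simp only: power_add)
  qed
  finally show ?thesis
    by simp
qed

lemma sum_qform_char_sum_even:
  fixes E :: "(nat \<Rightarrow> 'a::{field,finite}) set"
  assumes char: "CHAR('a) \<noteq> 2" and e: "e \<noteq> 0" and d: "even d" "2 \<le> d" and E: "E \<subseteq> vecs d"
  shows "(\<Sum>m\<in>vecs d. Re (qform_char_sum d e m) * (cmod (fourier d E m))\<^sup>2)
    = qchar e * real CARD('a) ^ (d div 2)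
      * (real CARD('a) * (\<Sum>m\<in>SQdual0 d e. (cmod (fourier d E m))\<^sup>2) - real (card E) / real CARD('a) ^ d)"
proof -
  let ?q = "real CARD('a)" and ?F = "\<lambda>m. (cmod (fourier d E m))\<^sup>2"
  have "Re (qform_char_sum d e m) * ?F m
      = qchar e * ?q ^ (d div 2) * (?q * (if qform d (inverse e) m = 0 then ?F m else 0) - ?F m)" for m
    by (cases "qform d (inverse e) m = 0") (simp_all add: qform_char_sum_even[OF char e d] algebra_simps)
  then have "(\<Sum>m\<in>vecs d. Re (qform_char_sum d e m) * ?F m)
      = qchar e * ?q ^ (d div 2) * (?q * (\<Sum>m\<in>vecs d. if qform d (inverse e) m = 0 then ?F m else 0)
          - (\<Sum>m\<in>vecs d. ?F m))"
    by (simp add: sum_distrib_left right_diff_distrib sum_subtractf mult.assoc)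
  also have "(\<Sum>m\<in>vecs d. if qform d (inverse e) m = 0 then ?F m else 0) = (\<Sum>m\<in>SQdual0 d e. ?F m)"
    by (simp add: SQdual0_def normQdual_def sum.inter_filter)
  also have "(\<Sum>m\<in>vecs d. ?F m) = real (card E) / ?q ^ d"
    by (rule sum_norm_fourier_squared[OF E])
  finally show ?thesis .
qed

lemma wcount_zero_even:
  fixes E :: "(nat \<Rightarrow> 'a::{field,finite}) set"
  assumes char: "CHAR('a) \<noteq> 2" and e: "e \<noteq> 0" and d: "even d" "2 \<le> d" and E: "E \<subseteq> vecs d"
  shows "real (wcount d e E 0) = real (card E) ^ 2 / real CARD('a)
    + qchar e * (real CARD('a) powr (3 * real d / 2) * (\<Sum>m\<in>SQdual0 d e. (cmod (fourier d E m))\<^sup>2)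
      - real CARD('a) powr ((real d - 2) / 2) * real (card E))"
proof -
  let ?q = "real CARD('a)" and ?S = "\<Sum>m\<in>SQdual0 d e. (cmod (fourier d E m))\<^sup>2"
  obtain k where k: "d = 2 * k" "k \<ge> 1"
    using d by (auto elim!: evenE)
  have "real (wcount d e E 0) = real (card E) ^ 2 / ?q
      + ?q ^ (d - 1) * (qchar e * ?q ^ k * (?q * ?S - real (card E) / ?q ^ d))"
    using wcount_zero_eq[OF _ E, of e] sum_qform_char_sum_even[OF char e d E] k by simp
  also have "?q ^ (d - 1) * (qchar e * ?q ^ k * (?q * ?S - real (card E) / ?q ^ d))
      = qchar e * (?q ^ (d - 1 + k + 1) * ?S - ?q ^ (d - 1 + k) / ?q ^ d * real (card E))"
    by (simp add: power_add algebra_simps)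
  also have "?q ^ (d - 1 + k + 1) = ?q powr (3 * real d / 2)"
    using k by (simp add: powr_realpow[symmetric])
  also have "?q ^ (d - 1 + k) / ?q ^ d = ?q powr ((real d - 2) / 2)"
  proof -
    have exp: "d - 1 + k = (k - 1) + d" "(real d - 2) / 2 = real (k - 1)"
      using k by simp_all
    have "?q ^ (d - 1 + k) / ?q ^ d = ?q ^ (k - 1)"
      by (simp only: exp(1) power_add) simp
    also have "\<dots> = ?q powr ((real d - 2) / 2)"
      by (simp only: exp(2)) (simp add: powr_realpow)
    finally show ?thesis .
  qed
  finally show ?thesis .
qed

lemma wcount_zero_odd_le:
  fixes E :: "(nat \<Rightarrow> 'a::{field,finite}) set"
  assumes char: "CHAR('a) \<noteq> 2" and e: "e \<noteq> 0" and d: "odd d" and E: "E \<subseteq> vecs d"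
  shows "real (wcount d e E 0)
    \<le> real (card E) ^ 2 / real CARD('a) + real CARD('a) powr ((real d - 1) / 2) * real (card E)"
proof -
  let ?q = "real CARD('a)" and ?F = "\<lambda>m. (cmod (fourier d E m))\<^sup>2" and ?k = "d div 2"
  have "1 \<le> d"
    using d by presburger
  have "(\<Sum>m\<in>vecs d. Re (qform_char_sum d e m) * ?F m) \<le> (\<Sum>m\<in>vecs d. ?q ^ (?k + 1) * ?F m)"
  proof (rule sum_mono)
    fix m
    have "Re (qform_char_sum d e m) \<le> ?q ^ (?k + 1)"
      using complex_Re_le_cmod norm_qform_char_sum_odd_le[OF char e d] by (rule order_trans)
    then show "Re (qform_char_sum d e m) * ?F m \<le> ?q ^ (?k + 1) * ?F m"
      by (rule mult_right_mono) simp
  qed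
  also have "\<dots> = ?q ^ (?k + 1) * real (card E) / ?q ^ d"
    by (simp add: sum_norm_fourier_squared[OF E] flip: sum_distrib_left)
  finally have "real (wcount d e E 0) \<le> real (card E) ^ 2 / ?q + ?q ^ (d - 1) * (?q ^ (?k + 1) * real (card E) / ?q ^ d)"
    unfolding wcount_zero_eq[OF \<open>1 \<le> d\<close> E] by (intro add_left_mono mult_left_mono) simp_all
  also have "?q ^ (d - 1) * (?q ^ (?k + 1) * real (card E) / ?q ^ d) = ?q ^ ?k * real (card E)"
    using \<open>1 \<le> d\<close> by (simp add: field_simps power_add power_diff)
  also have "?q ^ ?k = ?q powr ((real d - 1) / 2)"
    using d by (auto simp: powr_realpow elim!: oddE)
  finally show ?thesis .
qed

text \<open>The hypotheses on \<open>A\<close> only tie the square class of \<open>\<epsilon>\<close> to \<open>det A\<close>; the bounds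
  depend on \<open>\<epsilon>\<close> alone.\<close>

theorem proposition5p3:
  fixes E :: "(nat \<Rightarrow> 'a::{field,finite}) set"
    and d :: nat and \<epsilon> :: 'a and A :: "'a mat"
  assumes odd_char: "CHAR('a) \<noteq> 2"
    and d2: "d \<ge> 2"
    and E: "E \<subseteq> vecs d"
    and A: "A \<in> carrier_mat d d" "transpose_mat A = A" "det A \<noteq> 0"
    and eps0: "\<epsilon> \<noteq> 0"
    and eps_even: "even d \<Longrightarrow> qchar ((-1) ^ (d div 2) * \<epsilon>) = qchar (det A)"
    and eps_odd: "odd d \<Longrightarrow> qchar ((-1) ^ ((d - 1) div 2) * \<epsilon>) = qchar (det A)"
  shows
    "(even d \<and> qchar \<epsilon> = 1 \<longrightarrow>
        0 \<le> real (wcount d \<epsilon> E 0) \<and>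
        real (wcount d \<epsilon> E 0) \<le> real (card E) ^ 2 / real CARD('a)
          + real CARD('a) powr (3 * real d / 2) * (\<Sum>m\<in>SQdual0 d \<epsilon>. (cmod (fourier d E m))\<^sup>2))
   \<and> (even d \<and> qchar \<epsilon> = -1 \<longrightarrow>
        0 \<le> real (wcount d \<epsilon> E 0) \<and>
        real (wcount d \<epsilon> E 0) \<le> real (card E) ^ 2 / real CARD('a)
          + real CARD('a) powr ((real d - 2) / 2) * real (card E))
   \<and> (odd d \<longrightarrow>
        0 \<le> real (wcount d \<epsilon> E 0) \<and>
        real (wcount d \<epsilon> E 0) \<le> real (card E) ^ 2 / real CARD('a)
          + real CARD('a) powr ((real d - 1) / 2) * real (card E))"
proof (intro conjI impI; clarify?)
  let ?A = "real CARD('a) powr (3 * real d / 2) * (\<Sum>m\<in>SQdual0 d \<epsilon>. (cmod (fourier d E m))\<^sup>2)"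
    and ?B = "real CARD('a) powr ((real d - 2) / 2) * real (card E)"
  have "?A \<ge> 0" "?B \<ge> 0"
    by (simp_all add: sum_nonneg)
  show "real (wcount d \<epsilon> E 0) \<le> real (card E) ^ 2 / real CARD('a) + ?A" if "even d" "qchar \<epsilon> = 1"
    using wcount_zero_even[OF odd_char eps0 \<open>even d\<close> d2 E] that \<open>?B \<ge> 0\<close> by simp
  show "real (wcount d \<epsilon> E 0) \<le> real (card E) ^ 2 / real CARD('a) + ?B" if "even d" "qchar \<epsilon> = -1"
    using wcount_zero_even[OF odd_char eps0 \<open>even d\<close> d2 E] that \<open>?A \<ge> 0\<close> by simp
  show "real (wcount d \<epsilon> E 0) \<le> real (card E) ^ 2 / real CARD('a)
      + real CARD('a) powr ((real d - 1) / 2) * real (card E)" if "odd d"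
    using wcount_zero_odd_le[OF odd_char eps0 that E] .
qed simp_all

end
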